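(* Let $\mathcal G$ be an étale groupoid and $(Y,\Delta)$ a proper $\mathcal G$-simplicial complex satisfying hypotheses $(H_1)$ and $(H_2)$. Then the action of $\mathcal G$ on $|\Delta|$ is proper.
   Context: Étale groupoids are locally compact Hausdorff with range map a local homeomorphism. A $\mathcal G$-simplicial complex is a pair $(Y,\Delta)$ where $Y$ is a locally compact Hausdorff left $\mathcal G$-space whose anchor map $\rho:Y\to\mathcal G^{(0)}$ is a local homeomorphism and $\Delta$ is a family of finite nonempty subsets of $Y$ of bounded cardinality, each inside a fibre of $\rho$, closed under nonempty subsets and under $\delta\mapsto\gamma\delta$. It is proper if the $\mathcal G$-action on $Y$ is proper (i.e. $\mathcal G\ltimes Y$ is a proper groupoid). $|\Delta|=\{\mu\in P(Y):\mathrm{supp}(\mu)\in\Delta\}$, where $P(Y)$ is the space of positive Radon probability measures supported in a single fibre of $\rho$, with weak-$*$ topology from $C_c(Y,\mathbb R)$ and $\mathcal G$ acting by pushforward. $(H_1)$: for every compact $K\subseteq Y$, $\{y:\exists y'\in K,\{y,y'\}\in\Delta\}$ is compact. $(H_2)$: if nets $(y^{(i)}_\lambda)_\lambda$ converge to $y^{(i)}$ ($0\le i\le k$) and $\{y^{(0)}_\lambda,\dots,y^{(k)}_\lambda\}\in\Delta$ for all $\lambda$, then $\{y^{(0)},\dots,y^{(k)}\}\in\Delta$. *)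

theory Defs
  imports "HOL-Analysis.Analysis"
begin

definition local_homeomorphism_map :: "'a topology \<Rightarrow> 'b topology \<Rightarrow> ('a \<Rightarrow> 'b) \<Rightarrow> bool" where
  "local_homeomorphism_map X Y f \<longleftrightarrow>
     f ` topspace X \<subseteq> topspace Y \<and>
     (\<forall>x \<in> topspace X. \<exists>U. openin X U \<and> x \<in> U \<and> openin Y (f ` U) \<and>
          homeomorphic_map (subtopology X U) (subtopology Y (f ` U)) f)"

text \<open>A topological groupoid with arrow space TG (carrier G = topspace TG), range r,
  source s, partial multiplication m (defined on composable pairs s g = r h) and inverse i.\<close>

definition unit_space :: "'g topology \<Rightarrow> ('g \<Rightarrow> 'g) \<Rightarrow> 'g set" where
  "unit_space TG r = r ` topspace TG"

definition composable :: "'g topology \<Rightarrow> ('g \<Rightarrow> 'g) \<Rightarrow> ('g \<Rightarrow> 'g) \<Rightarrow> ('g \<times> 'g) set" where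
  "composable TG r s = {(g, h). g \<in> topspace TG \<and> h \<in> topspace TG \<and> s g = r h}"

definition groupoid :: "'g topology \<Rightarrow> ('g \<Rightarrow> 'g) \<Rightarrow> ('g \<Rightarrow> 'g) \<Rightarrow> ('g \<Rightarrow> 'g \<Rightarrow> 'g) \<Rightarrow> ('g \<Rightarrow> 'g) \<Rightarrow> bool" where
  "groupoid TG r s m i \<longleftrightarrow>
     (\<forall>g \<in> topspace TG. r g \<in> topspace TG \<and> s g \<in> topspace TG \<and> i g \<in> topspace TG
        \<and> r (r g) = r g \<and> s (r g) = r g \<and> r (s g) = s g \<and> s (s g) = s g
        \<and> r (i g) = s g \<and> s (i g) = r g
        \<and> m (r g) g = g \<and> m g (s g) = g
        \<and> m g (i g) = r g \<and> m (i g) g = s g) \<and>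
     (\<forall>(g, h) \<in> composable TG r s. m g h \<in> topspace TG \<and> r (m g h) = r g \<and> s (m g h) = s h) \<and>
     (\<forall>g \<in> topspace TG. \<forall>h \<in> topspace TG. \<forall>k \<in> topspace TG.
        s g = r h \<longrightarrow> s h = r k \<longrightarrow> m (m g h) k = m g (m h k))"

definition topological_groupoid :: "'g topology \<Rightarrow> ('g \<Rightarrow> 'g) \<Rightarrow> ('g \<Rightarrow> 'g) \<Rightarrow> ('g \<Rightarrow> 'g \<Rightarrow> 'g) \<Rightarrow> ('g \<Rightarrow> 'g) \<Rightarrow> bool" where
  "topological_groupoid TG r s m i \<longleftrightarrow>
     groupoid TG r s m i \<and>
     continuous_map TG TG r \<and> continuous_map TG TG s \<and> continuous_map TG TG i \<and>
     continuous_map (subtopology (prod_topology TG TG) (composable TG r s)) TG (\<lambda>(g, h). m g h)"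

definition etale_groupoid :: "'g topology \<Rightarrow> ('g \<Rightarrow> 'g) \<Rightarrow> ('g \<Rightarrow> 'g) \<Rightarrow> ('g \<Rightarrow> 'g \<Rightarrow> 'g) \<Rightarrow> ('g \<Rightarrow> 'g) \<Rightarrow> bool" where
  "etale_groupoid TG r s m i \<longleftrightarrow>
     topological_groupoid TG r s m i \<and> Hausdorff_space TG \<and> locally_compact_space TG \<and>
     local_homeomorphism_map TG (subtopology TG (unit_space TG r)) r"

definition action_domain :: "'g topology \<Rightarrow> ('g \<Rightarrow> 'g) \<Rightarrow> 'y set \<Rightarrow> ('y \<Rightarrow> 'g) \<Rightarrow> ('g \<times> 'y) set" where
  "action_domain TG s Y \<rho> = {(g, y). g \<in> topspace TG \<and> y \<in> Y \<and> s g = \<rho> y}"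

definition G_set :: "'g topology \<Rightarrow> ('g \<Rightarrow> 'g) \<Rightarrow> ('g \<Rightarrow> 'g) \<Rightarrow> ('g \<Rightarrow> 'g \<Rightarrow> 'g)
     \<Rightarrow> 'y set \<Rightarrow> ('y \<Rightarrow> 'g) \<Rightarrow> ('g \<Rightarrow> 'y \<Rightarrow> 'y) \<Rightarrow> bool" where
  "G_set TG r s m Y \<rho> act \<longleftrightarrow>
     (\<forall>y \<in> Y. \<rho> y \<in> unit_space TG r \<and> act (\<rho> y) y = y) \<and>
     (\<forall>(g, y) \<in> action_domain TG s Y \<rho>. act g y \<in> Y \<and> \<rho> (act g y) = r g) \<and>
     (\<forall>g \<in> topspace TG. \<forall>h \<in> topspace TG. \<forall>y \<in> Y.
        s g = r h \<longrightarrow> s h = \<rho> y \<longrightarrow> act (m g h) y = act g (act h y))"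

definition G_space :: "'g topology \<Rightarrow> ('g \<Rightarrow> 'g) \<Rightarrow> ('g \<Rightarrow> 'g) \<Rightarrow> ('g \<Rightarrow> 'g \<Rightarrow> 'g)
     \<Rightarrow> 'y topology \<Rightarrow> ('y \<Rightarrow> 'g) \<Rightarrow> ('g \<Rightarrow> 'y \<Rightarrow> 'y) \<Rightarrow> bool" where
  "G_space TG r s m TY \<rho> act \<longleftrightarrow>
     G_set TG r s m (topspace TY) \<rho> act \<and>
     Hausdorff_space TY \<and> locally_compact_space TY \<and>
     local_homeomorphism_map TY (subtopology TG (unit_space TG r)) \<rho> \<and>
     continuous_map (subtopology (prod_topology TG TY) (action_domain TG s (topspace TY) \<rho>)) TY
        (\<lambda>(g, y). act g y)"

text \<open>Proper action: the transformation groupoid G \<ltimes> Z is proper, i.e. its map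
  (range, source) : (g, z) \<mapsto> (g z, z) is a proper map (closed with compact fibres).\<close>
definition proper_action :: "'g topology \<Rightarrow> ('g \<Rightarrow> 'g) \<Rightarrow> 'z topology \<Rightarrow> ('z \<Rightarrow> 'g)
     \<Rightarrow> ('g \<Rightarrow> 'z \<Rightarrow> 'z) \<Rightarrow> bool" where
  "proper_action TG s TZ \<rho> act \<longleftrightarrow>
     proper_map (subtopology (prod_topology TG TZ) (action_domain TG s (topspace TZ) \<rho>))
                (prod_topology TZ TZ) (\<lambda>(g, z). (act g z, z))"

definition G_simplicial_complex :: "'g topology \<Rightarrow> ('g \<Rightarrow> 'g) \<Rightarrow> ('g \<Rightarrow> 'g) \<Rightarrow> ('g \<Rightarrow> 'g \<Rightarrow> 'g)
     \<Rightarrow> 'y topology \<Rightarrow> ('y \<Rightarrow> 'g) \<Rightarrow> ('g \<Rightarrow> 'y \<Rightarrow> 'y) \<Rightarrow> 'y set set \<Rightarrow> bool" where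
  "G_simplicial_complex TG r s m TY \<rho> act \<Delta> \<longleftrightarrow>
     G_space TG r s m TY \<rho> act \<and>
     (\<forall>\<delta> \<in> \<Delta>. finite \<delta> \<and> \<delta> \<noteq> {} \<and> \<delta> \<subseteq> topspace TY \<and> (\<exists>x. \<forall>y \<in> \<delta>. \<rho> y = x)) \<and>
     (\<exists>N::nat. \<forall>\<delta> \<in> \<Delta>. card \<delta> \<le> N) \<and>
     (\<forall>\<delta> \<in> \<Delta>. \<forall>\<delta>'. \<delta>' \<subseteq> \<delta> \<longrightarrow> \<delta>' \<noteq> {} \<longrightarrow> \<delta>' \<in> \<Delta>) \<and>
     (\<forall>\<delta> \<in> \<Delta>. \<forall>g \<in> topspace TG. (\<forall>y \<in> \<delta>. s g = \<rho> y) \<longrightarrow> act g ` \<delta> \<in> \<Delta>)"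

definition proper_G_simplicial_complex where
  "proper_G_simplicial_complex TG r s m TY \<rho> act \<Delta> \<longleftrightarrow>
     G_simplicial_complex TG r s m TY \<rho> act \<Delta> \<and> proper_action TG s TY \<rho> act"

definition hyp_H1 :: "'y topology \<Rightarrow> 'y set set \<Rightarrow> bool" where
  "hyp_H1 TY \<Delta> \<longleftrightarrow>
     (\<forall>K. compactin TY K \<longrightarrow> compactin TY {y. \<exists>y' \<in> K. {y, y'} \<in> \<Delta>})"

text \<open>(H2) with nets: a family of k+1 nets indexed by a directed set is the same as one net
  in the space of tuples; we express nets through (proper) filters on tuples
  z :: nat \<Rightarrow> 'y, using the coordinates z 0, ..., z k.\<close>
definition hyp_H2 :: "'y topology \<Rightarrow> 'y set set \<Rightarrow> bool" where
  "hyp_H2 TY \<Delta> \<longleftrightarrow>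
     (\<forall>(F :: (nat \<Rightarrow> 'y) filter) (k::nat) (y :: nat \<Rightarrow> 'y).
        F \<noteq> bot \<longrightarrow>
        (\<forall>i \<le> k. limitin TY (\<lambda>z. z i) (y i) F) \<longrightarrow>
        (\<forall>\<^sub>F z in F. (\<lambda>i. z i) ` {0..k} \<in> \<Delta>) \<longrightarrow>
        y ` {0..k} \<in> \<Delta>)"

definition Cc :: "'y topology \<Rightarrow> ('y \<Rightarrow> real) \<Rightarrow> bool" where
  "Cc TY f \<longleftrightarrow> continuous_map TY euclideanreal f \<and>
     compactin TY (TY closure_of {y \<in> topspace TY. f y \<noteq> 0})"

text \<open>Positive Radon probability measures with finite support are exactly finite convex
  combinations of Dirac measures; we represent such a measure by its weight function
  \<mu> :: 'y \<Rightarrow> real, so that supp \<mu> = {y. \<mu> y \<noteq> 0} and \<integral> f d\<mu> = \<Sum>y\<in>supp \<mu>. \<mu> y * f y.\<close>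
definition msupp :: "('y \<Rightarrow> real) \<Rightarrow> 'y set" where
  "msupp \<mu> = {y. \<mu> y \<noteq> 0}"

definition mintegral :: "('y \<Rightarrow> real) \<Rightarrow> ('y \<Rightarrow> real) \<Rightarrow> real" where
  "mintegral \<mu> f = (\<Sum>y \<in> msupp \<mu>. \<mu> y * f y)"

definition realization :: "'y set set \<Rightarrow> ('y \<Rightarrow> real) set" where
  "realization \<Delta> = {\<mu>. (\<forall>y. 0 \<le> \<mu> y) \<and> msupp \<mu> \<in> \<Delta> \<and> finite (msupp \<mu>) \<and>
                         sum \<mu> (msupp \<mu>) = 1}"

text \<open>Weak-* topology induced from C_c(Y,R) (subspace topology of P(Y) on |\<Delta>|, which is the
  initial topology of the maps \<mu> \<mapsto> \<integral> f d\<mu>, f \<in> C_c(Y)).\<close>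
definition realization_topology :: "'y topology \<Rightarrow> 'y set set \<Rightarrow> ('y \<Rightarrow> real) topology" where
  "realization_topology TY \<Delta> = topology_generated_by
     {{\<mu> \<in> realization \<Delta>. mintegral \<mu> f \<in> U} | f U. Cc TY f \<and> open U}"

text \<open>Anchor of a measure: the base point of the fibre containing its support.\<close>
definition realization_anchor :: "('y \<Rightarrow> 'g) \<Rightarrow> ('y \<Rightarrow> real) \<Rightarrow> 'g" where
  "realization_anchor \<rho> \<mu> = \<rho> (SOME y. y \<in> msupp \<mu>)"

definition pushforward :: "('g \<Rightarrow> 'y \<Rightarrow> 'y) \<Rightarrow> 'g \<Rightarrow> ('y \<Rightarrow> real) \<Rightarrow> ('y \<Rightarrow> real)" where
  "pushforward act g \<mu> = (\<lambda>y'. \<Sum>y \<in> {y \<in> msupp \<mu>. act g y = y'}. \<mu> y)"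

end

(* Properness is tested on convergent filters (nets): a map is proper once every convergent
   filter of images lifts, after refinement, to a convergent filter upstairs with the right limit.
   So let (g, mu) run through a filter with mu -> mu0 and g mu -> nu0 in |Delta|. Integrating a
   bump function at a support point of mu0 shows that eventually supp mu meets a fixed compact set,
   so by (H1) it lies in a compact L; likewise for supp (g mu), and properness of the action on Y
   confines g to a compact set of arrows. As simplices have at most N vertices, mu is a sum of N
   weighted Dirac masses with atoms in L and weights in [0,1]. Refining once more, g -> g0 and
   the atoms and weights converge; hence mu0 = sum a_j delta_(y_j) and nu0 = sum a_j delta_(g0 y_j),
   that is nu0 = g0 mu0. *)

theory Submission
  imports Defs
begin

section \<open>Filter criteria for compactness and properness\<close>

lemma limitin_filter_mono: "limitin X f l F \<Longrightarrow> F' \<le> F \<Longrightarrow> limitin X f l F'"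
  unfolding limitin_def using filter_leD by blast

lemma limitin_le_filtercomap_nhdsin:
  assumes "l \<in> topspace X" "F \<le> filtercomap f (nhdsin X l)"
  shows "limitin X f l F"
  unfolding limitin_def
proof (intro conjI allI impI assms(1))
  fix U assume "openin X U \<and> l \<in> U"
  then have "eventually (\<lambda>x. f x \<in> U) (filtercomap f (nhdsin X l))"
    unfolding eventually_filtercomap eventually_nhdsin by (intro exI[of _ "\<lambda>z. z \<in> U"]) auto
  then show "eventually (\<lambda>x. f x \<in> U) F" using assms(2) by (rule filter_leD[rotated])
qed

lemma compactin_limit_refinement:
  assumes "F \<noteq> bot" and K: "compactin X K" and ev: "eventually (\<lambda>x. \<phi> x \<in> K) F"
  shows "\<exists>F'\<le>F. F' \<noteq> bot \<and> (\<exists>p\<in>K. limitin X \<phi> p F')"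
proof (rule ccontr)
  assume no_limit: "\<not> ?thesis"
  have "\<exists>U. openin X U \<and> p \<in> U \<and> eventually (\<lambda>x. \<phi> x \<notin> U) F" if p: "p \<in> K" for p
  proof -
    let ?F' = "inf F (filtercomap \<phi> (nhdsin X p))"
    have pX: "p \<in> topspace X" using K p compactin_subset_topspace by blast
    have "limitin X \<phi> p ?F'" using pX inf_le2 by (rule limitin_le_filtercomap_nhdsin)
    then have "?F' = bot" using no_limit p inf_le1 by blast
    then have "eventually (\<lambda>x. False) ?F'" by simp
    then obtain P Q where PQ: "eventually P F" "eventually Q (filtercomap \<phi> (nhdsin X p))"
      "\<And>x. P x \<Longrightarrow> Q x \<Longrightarrow> False"
      unfolding eventually_inf by blast
    then obtain R where R: "eventually R (nhdsin X p)" "\<And>x. R (\<phi> x) \<Longrightarrow> Q x"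
      unfolding eventually_filtercomap by blast
    then obtain U where U: "openin X U" "p \<in> U" "\<And>z. z \<in> U \<Longrightarrow> R z"
      using pX unfolding eventually_nhdsin by blast
    have "eventually (\<lambda>x. \<phi> x \<notin> U) F"
      using PQ(1) by (rule eventually_mono) (use PQ(3) R(2) U(3) in blast)
    with U show ?thesis by blast
  qed
  then obtain U where U: "\<forall>p\<in>K. openin X (U p) \<and> p \<in> U p \<and> eventually (\<lambda>x. \<phi> x \<notin> U p) F"
    by (metis (no_types))
  then obtain \<V> where "finite \<V>" "\<V> \<subseteq> U ` K" "K \<subseteq> \<Union>\<V>"
    using compactinD[OF K, of "U ` K"] by blast
  then obtain K0 where K0: "finite K0" "K0 \<subseteq> K" "K \<subseteq> (\<Union>p\<in>K0. U p)"
    by (metis finite_subset_image)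
  have "eventually (\<lambda>x. \<forall>p\<in>K0. \<phi> x \<notin> U p) F"
    using K0 U by (intro eventually_ball_finite) auto
  then have "eventually (\<lambda>x. False) F"
    using ev by eventually_elim (use K0(3) in blast)
  with \<open>F \<noteq> bot\<close> show False by simp
qed

lemma compactin_if_limit_refinements:
  assumes KX: "K \<subseteq> topspace X"
    and refine: "\<And>F. F \<noteq> bot \<Longrightarrow> eventually (\<lambda>x. x \<in> K) F
                  \<Longrightarrow> \<exists>F'\<le>F. F' \<noteq> bot \<and> (\<exists>p\<in>K. limitin X (\<lambda>x. x) p F')"
  shows "compactin X K"
  unfolding compactin_def
proof (intro conjI KX allI impI)
  fix \<U> assume cover: "(\<forall>U\<in>\<U>. openin X U) \<and> K \<subseteq> \<Union>\<U>"
  show "\<exists>\<V>. finite \<V> \<and> \<V> \<subseteq> \<U> \<and> K \<subseteq> \<Union>\<V>"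
  proof (rule ccontr)
    assume no_subcover: "\<not> ?thesis"
    define F where "F = (INF \<V>\<in>{\<V>. finite \<V> \<and> \<V> \<subseteq> \<U>}. principal (K - \<Union>\<V>))"
    have ev: "eventually (\<lambda>x. x \<in> K - \<Union>\<V>) F" if "finite \<V>" "\<V> \<subseteq> \<U>" for \<V>
      unfolding F_def using that
      by (intro eventually_INF1[where i = \<V>]) (auto simp: eventually_principal)
    have "F \<noteq> bot"
      unfolding F_def
    proof (rule INF_filter_not_bot)
      fix B assume B: "B \<subseteq> {\<V>. finite \<V> \<and> \<V> \<subseteq> \<U>}" "finite B"
      then have "finite (\<Union>B) \<and> \<Union>B \<subseteq> \<U>" by auto
      then have "\<not> K \<subseteq> \<Union>(\<Union>B)" using no_subcover by (intro notI) (metis exI)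
      then have "(\<Inter>\<V>\<in>B. K - \<Union>\<V>) \<noteq> {}" by auto
      then show "(INF \<V>\<in>B. principal (K - \<Union>\<V>)) \<noteq> bot"
        using B(2) by (simp add: INF_principal_finite principal_eq_bot_iff)
    qed
    moreover have "eventually (\<lambda>x. x \<in> K) F" using ev[of "{}"] by simp
    ultimately obtain F' p where F': "F' \<le> F" "F' \<noteq> bot" "p \<in> K" "limitin X (\<lambda>x. x) p F'"
      using refine by blast
    then obtain U where U: "U \<in> \<U>" "p \<in> U" using cover by blast
    then have "eventually (\<lambda>x. x \<in> U) F'"
      using limitinD[OF F'(4)] cover by blast
    moreover have "eventually (\<lambda>x. x \<in> K - U) F'"
      using ev[of "{U}"] U(1) F'(1) filter_leD by simp
    ultimately have "eventually (\<lambda>x. False) F'" by eventually_elim simp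
    with F'(2) show False by simp
  qed
qed

lemma closure_of_image_limit_filter:
  assumes q: "q \<in> Y closure_of (f ` C)"
  shows "\<exists>F. F \<noteq> bot \<and> eventually (\<lambda>x. x \<in> C) F \<and> limitin Y f q F"
proof (intro exI conjI)
  let ?F = "inf (filtercomap f (nhdsin Y q)) (principal C)"
  have qY: "q \<in> topspace Y" using q by (simp add: in_closure_of)
  show "?F \<noteq> bot"
  proof
    assume "?F = bot"
    then have "eventually (\<lambda>x. False) ?F" by simp
    then have "eventually (\<lambda>x. x \<notin> C) (filtercomap f (nhdsin Y q))"
      unfolding eventually_inf_principal by simp
    then obtain R where R: "eventually R (nhdsin Y q)" "\<And>x. R (f x) \<Longrightarrow> x \<notin> C"
      unfolding eventually_filtercomap by blast
    then obtain S where S: "openin Y S" "q \<in> S" "\<And>z. z \<in> S \<Longrightarrow> R z"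
      using qY unfolding eventually_nhdsin by blast
    have "\<exists>y. y \<in> f ` C \<and> y \<in> S"
      using q S(1,2) unfolding in_closure_of by blast
    then show False using R(2) S(3) by blast
  qed
  show "eventually (\<lambda>x. x \<in> C) ?F" by (simp add: eventually_inf_principal)
  show "limitin Y f q ?F" using qY inf_le1 by (rule limitin_le_filtercomap_nhdsin)
qed

lemma proper_map_if_limits_lift:
  assumes into: "f ` topspace X \<subseteq> topspace Y"
    and lift: "\<And>F q. F \<noteq> bot \<Longrightarrow> eventually (\<lambda>x. x \<in> topspace X) F \<Longrightarrow> limitin Y f q F
                 \<Longrightarrow> \<exists>F'\<le>F. F' \<noteq> bot \<and> (\<exists>x. limitin X (\<lambda>x. x) x F' \<and> f x = q)"
  shows "proper_map X Y f"
  unfolding proper_map_def closed_map_def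
proof (intro conjI allI impI ballI)
  fix C assume C: "closedin X C"
  have "Y closure_of (f ` C) \<subseteq> f ` C"
  proof
    fix q assume "q \<in> Y closure_of (f ` C)"
    then obtain F where F: "F \<noteq> bot" "eventually (\<lambda>x. x \<in> C) F" "limitin Y f q F"
      by (metis closure_of_image_limit_filter)
    have "eventually (\<lambda>x. x \<in> topspace X) F"
      using F(2) by (rule eventually_mono) (use closedin_subset[OF C] in blast)
    then obtain F' x where F': "F' \<le> F" "F' \<noteq> bot" "limitin X (\<lambda>x. x) x F'" "f x = q"
      using lift[OF F(1) _ F(3)] by blast
    have "x \<in> C" using limitin_closedin[OF F'(3) C filter_leD[OF F'(1) F(2)]] F'(2) by simp
    then show "q \<in> f ` C" using F'(4) by blast
  qed
  moreover have "f ` C \<subseteq> topspace Y" using into closedin_subset[OF C] by blast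
  ultimately show "closedin Y (f ` C)" using closure_of_subset_eq by blast
next
  fix q assume qY: "q \<in> topspace Y"
  show "compactin X {x \<in> topspace X. f x = q}"
  proof (rule compactin_if_limit_refinements)
    fix F assume F: "F \<noteq> bot" "eventually (\<lambda>x. x \<in> {x \<in> topspace X. f x = q}) F"
    have X: "eventually (\<lambda>x. x \<in> topspace X) F"
      using F(2) by (rule eventually_mono) simp
    have "eventually (\<lambda>x. f x = q) F"
      using F(2) by (rule eventually_mono) simp
    then have "limitin Y f q F"
      using qY by (rule limitin_eventually[rotated])
    then obtain F' x where F': "F' \<le> F" "F' \<noteq> bot" "limitin X (\<lambda>x. x) x F'" "f x = q"
      using lift[OF F(1) X] by blast
    moreover have "x \<in> topspace X" using F'(3) by (rule limitin_topspace)
    ultimately show "\<exists>F'\<le>F. F' \<noteq> bot \<and> (\<exists>p\<in>{x \<in> topspace X. f x = q}. limitin X (\<lambda>x. x) p F')"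
      by blast
  qed auto
qed

lemma compactin_limit_refinement_finite_family:
  fixes \<phi> :: "'a \<Rightarrow> nat \<Rightarrow> 'b"
  assumes "F \<noteq> bot" and K: "compactin X K" and ev: "\<And>j. j < n \<Longrightarrow> eventually (\<lambda>x. \<phi> x j \<in> K) F"
  shows "\<exists>F'\<le>F. F' \<noteq> bot \<and> (\<exists>p. \<forall>j<n. p j \<in> K \<and> limitin X (\<lambda>x. \<phi> x j) (p j) F')"
proof -
  have compact: "compactin (product_topology (\<lambda>_. X) {..<n}) (PiE {..<n} (\<lambda>_. K))"
    using K by (simp add: compactin_PiE)
  have ev_restrict: "eventually (\<lambda>x. restrict (\<phi> x) {..<n} \<in> PiE {..<n} (\<lambda>_. K)) F"
    using ev by (auto simp: PiE_iff intro: eventually_ball_finite)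
  obtain F' p where F': "F' \<le> F" "F' \<noteq> bot" and p: "p \<in> PiE {..<n} (\<lambda>_. K)"
    and lim: "limitin (product_topology (\<lambda>_. X) {..<n}) (\<lambda>x. restrict (\<phi> x) {..<n}) p F'"
    using compactin_limit_refinement[OF \<open>F \<noteq> bot\<close> compact ev_restrict] by blast
  have "p j \<in> K \<and> limitin X (\<lambda>x. \<phi> x j) (p j) F'" if j: "j < n" for j
  proof
    show "p j \<in> K" using p j by auto
    have "limitin X (\<lambda>x. restrict (\<phi> x) {..<n} j) (p j) F'"
      using lim j unfolding limitin_componentwise by blast
    then show "limitin X (\<lambda>x. \<phi> x j) (p j) F'" using j by simp
  qed
  then show ?thesis using F' by blast
qed

section \<open>Finitely supported measures\<close>

lemma exists_Cc_bump:
  assumes H: "Hausdorff_space X" and LC: "locally_compact_space X" and U: "openin X U" "y \<in> U"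
    and T: "finite T" "y \<notin> T"
  shows "\<exists>f. Cc X f \<and> f y = 1 \<and> (\<forall>x. 0 \<le> f x) \<and> (\<forall>x. x \<notin> U \<longrightarrow> f x = 0) \<and> (\<forall>x\<in>T. f x = 0)"
proof -
  have yX: "y \<in> topspace X" using U openin_subset by blast
  obtain V K where V: "openin X V" "compactin X K" "y \<in> V" "V \<subseteq> K"
    using LC yX unfolding locally_compact_space_def by blast
  define W where "W = U \<inter> V - (T \<inter> topspace X)"
  have "closedin X (T \<inter> topspace X)"
    using Hausdorff_imp_t1_space[OF H] T t1_space_closedin_finite by (metis inf_le2 finite_Int)
  then have "openin X W" unfolding W_def using U V by blast
  moreover have "completely_regular_space X"
    using locally_compact_regular_imp_completely_regular_space LC H by blast
  moreover have "y \<in> topspace X - (topspace X - W)" using U V T yX unfolding W_def by auto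
  ultimately obtain f0 :: "_ \<Rightarrow> real" where f0: "continuous_map X (top_of_set {0..1}) f0" "f0 y = 0"
      "f0 ` (topspace X - W) \<subseteq> {1}"
    unfolding completely_regular_space_def by blast
  define f where "f x = (if x \<in> topspace X then 1 - f0 x else 0)" for x
  have f0_range: "f0 x \<in> {0..1}" if "x \<in> topspace X" for x
    using f0(1) that by (auto simp: continuous_map_def)
  have "continuous_map X euclideanreal (\<lambda>x. 1 - f0 x)"
    using f0(1) by (intro continuous_intros) (simp add: continuous_map_in_subtopology)
  then have "continuous_map X euclideanreal f"
    by (rule continuous_map_eq) (simp add: f_def)
  moreover have "X closure_of {x \<in> topspace X. f x \<noteq> 0} \<subseteq> K"
  proof (rule closure_of_minimal)
    show "{x \<in> topspace X. f x \<noteq> 0} \<subseteq> K" using f0(3) V(4) unfolding f_def W_def by force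
    show "closedin X K" using compactin_imp_closedin[OF H V(2)] .
  qed
  then have "compactin X (X closure_of {x \<in> topspace X. f x \<noteq> 0})"
    using closed_compactin V(2) closedin_closure_of by blast
  ultimately have "Cc X f" by (simp add: Cc_def)
  moreover have "f y = 1" using yX f0(2) by (simp add: f_def)
  moreover have "\<forall>x. 0 \<le> f x" using f0_range by (simp add: f_def)
  moreover have "\<forall>x. x \<notin> U \<longrightarrow> f x = 0" "\<forall>x\<in>T. f x = 0"
    using f0(3) unfolding f_def W_def by force+
  ultimately show ?thesis by blast
qed

definition dirac_sum :: "'i set \<Rightarrow> ('i \<Rightarrow> real) \<Rightarrow> ('i \<Rightarrow> 'y) \<Rightarrow> 'y \<Rightarrow> real" where
  "dirac_sum I a e = (\<lambda>y. \<Sum>i\<in>{i\<in>I. e i = y}. a i)"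

lemma msupp_dirac_sum_subset: "msupp (dirac_sum I a e) \<subseteq> e ` I"
proof
  fix y assume y: "y \<in> msupp (dirac_sum I a e)"
  show "y \<in> e ` I"
  proof (rule ccontr)
    assume "y \<notin> e ` I"
    then have "{i\<in>I. e i = y} = {}" by auto
    with y show False by (simp add: msupp_def dirac_sum_def)
  qed
qed

lemma finite_msupp_dirac_sum: "finite I \<Longrightarrow> finite (msupp (dirac_sum I a e))"
  using finite_subset[OF msupp_dirac_sum_subset finite_imageI] .

lemma mintegral_dirac_sum:
  assumes "finite I"
  shows "mintegral (dirac_sum I a e) f = (\<Sum>i\<in>I. a i * f (e i))"
proof -
  have "mintegral (dirac_sum I a e) f = (\<Sum>y\<in>e ` I. dirac_sum I a e y * f y)"
    unfolding mintegral_def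
    by (rule sum.mono_neutral_left)
       (use msupp_dirac_sum_subset[of I a e] assms in \<open>auto simp: msupp_def\<close>)
  also have "\<dots> = (\<Sum>y\<in>e ` I. \<Sum>i\<in>{i\<in>I. e i = y}. a i * f (e i))"
    unfolding dirac_sum_def sum_distrib_right by (intro sum.cong refl) auto
  also have "\<dots> = (\<Sum>i\<in>I. a i * f (e i))"
    by (rule sum.image_gen[symmetric]) (rule assms)
  finally show ?thesis .
qed

lemma pushforward_eq_dirac_sum: "pushforward act g \<mu> = dirac_sum (msupp \<mu>) \<mu> (act g)"
  by (simp add: pushforward_def dirac_sum_def)

lemma finite_msupp_pushforward: "finite (msupp \<mu>) \<Longrightarrow> finite (msupp (pushforward act g \<mu>))"
  unfolding pushforward_eq_dirac_sum by (rule finite_msupp_dirac_sum)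

lemma mintegral_pushforward:
  assumes "finite (msupp \<mu>)"
  shows "mintegral (pushforward act g \<mu>) f = mintegral \<mu> (\<lambda>y. f (act g y))"
  unfolding pushforward_eq_dirac_sum mintegral_dirac_sum[OF assms] by (simp add: mintegral_def)

lemma mintegral_eq_weight:
  assumes "finite (msupp \<mu>)" "\<forall>z\<in>msupp \<mu> - {y}. f z = 0" "f y = 1"
  shows "mintegral \<mu> f = \<mu> y"
proof -
  have "mintegral \<mu> f = (\<Sum>z\<in>msupp \<mu>. if z = y then \<mu> y else 0)"
    unfolding mintegral_def using assms by (intro sum.cong) auto
  also have "\<dots> = \<mu> y"
    using assms(1) by (auto simp: msupp_def)
  finally show ?thesis .
qed

lemma finite_weights_eqI:
  fixes \<mu>1 \<mu>2 :: "'y \<Rightarrow> real"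
  assumes "finite (msupp \<mu>1)" "finite (msupp \<mu>2)" "\<And>f. mintegral \<mu>1 f = mintegral \<mu>2 f"
  shows "\<mu>1 = \<mu>2"
proof (rule ext)
  fix y :: 'y
  let ?f = "\<lambda>z. if z = y then 1 else 0 :: real"
  have "\<mu>1 y = mintegral \<mu>1 ?f" by (rule mintegral_eq_weight[symmetric]) (use assms(1) in auto)
  also have "\<dots> = mintegral \<mu>2 ?f" by (rule assms(3))
  also have "\<dots> = \<mu>2 y" by (rule mintegral_eq_weight) (use assms(2) in auto)
  finally show "\<mu>1 y = \<mu>2 y" .
qed

lemma pushforward_dirac_sum:
  assumes "finite I"
  shows "pushforward act g (dirac_sum I a e) = dirac_sum I a (\<lambda>i. act g (e i))"
  using assms by (intro finite_weights_eqI)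
    (simp_all add: finite_msupp_dirac_sum finite_msupp_pushforward mintegral_pushforward
      mintegral_dirac_sum)

lemma msupp_pushforward:
  assumes "\<And>y. 0 \<le> \<mu> y" "finite (msupp \<mu>)"
  shows "msupp (pushforward act g \<mu>) = act g ` msupp \<mu>"
proof
  show "msupp (pushforward act g \<mu>) \<subseteq> act g ` msupp \<mu>"
    unfolding pushforward_eq_dirac_sum by (rule msupp_dirac_sum_subset)
  show "act g ` msupp \<mu> \<subseteq> msupp (pushforward act g \<mu>)"
  proof
    fix y' assume "y' \<in> act g ` msupp \<mu>"
    then obtain y where y: "y \<in> msupp \<mu>" "y' = act g y" by blast
    have "0 < \<mu> y" using assms(1)[of y] y(1) by (simp add: msupp_def)
    also have "\<mu> y \<le> (\<Sum>z\<in>{z\<in>msupp \<mu>. act g z = y'}. \<mu> z)"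
      by (rule member_le_sum) (use assms y in auto)
    finally show "y' \<in> msupp (pushforward act g \<mu>)"
      unfolding pushforward_def msupp_def by simp
  qed
qed

lemma dirac_sum_enumeration:
  assumes fin: "finite (msupp \<mu>)" and ne: "msupp \<mu> \<noteq> {}" and card: "card (msupp \<mu>) \<le> n"
  shows "\<exists>z w. (\<forall>j. z j \<in> msupp \<mu>) \<and> (\<forall>j. w j \<in> insert 0 (\<mu> ` msupp \<mu>))
           \<and> dirac_sum {..<n} w z = \<mu>"
proof -
  let ?k = "card (msupp \<mu>)"
  obtain h where h: "bij_betw h {0..<?k} (msupp \<mu>)"
    using ex_bij_betw_nat_finite[OF fin] by blast
  define z where "z j = (if j < ?k then h j else h 0)" for j
  define w where "w j = (if j < ?k then \<mu> (h j) else 0)" for j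
  have "0 < ?k" using fin ne by (simp add: card_gt_0_iff)
  then have "z j \<in> msupp \<mu>" for j
    using bij_betwE[OF h] unfolding z_def by auto
  moreover have "w j \<in> insert 0 (\<mu> ` msupp \<mu>)" for j
    using bij_betwE[OF h] unfolding w_def by auto
  moreover have "dirac_sum {..<n} w z = \<mu>"
  proof (rule finite_weights_eqI[OF finite_msupp_dirac_sum[OF finite_lessThan] fin])
    fix f
    have "mintegral (dirac_sum {..<n} w z) f = (\<Sum>j<n. w j * f (z j))"
      by (simp add: mintegral_dirac_sum)
    also have "\<dots> = (\<Sum>j\<in>{0..<?k}. \<mu> (h j) * f (h j))"
      by (rule sum.mono_neutral_cong_right) (use card in \<open>auto simp: w_def z_def\<close>)
    also have "\<dots> = mintegral \<mu> f"
      unfolding mintegral_def by (rule sum.reindex_bij_betw[OF h])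
    finally show "mintegral (dirac_sum {..<n} w z) f = mintegral \<mu> f" .
  qed
  ultimately show ?thesis by blast
qed

section \<open>The weak-* topology on the realization\<close>

lemma topspace_realization_topology [simp]:
  "topspace (realization_topology TY \<Delta>) = realization \<Delta>"
proof -
  have "Cc TY (\<lambda>_. 0)" by (simp add: Cc_def)
  then have "realization \<Delta> \<in> {{\<mu> \<in> realization \<Delta>. mintegral \<mu> f \<in> U} | f U. Cc TY f \<and> open U}"
    by (intro CollectI exI[of _ "\<lambda>_. 0"] exI[of _ UNIV]) auto
  then show ?thesis unfolding realization_topology_def by auto
qed

lemma realization_weights:
  assumes "\<mu> \<in> realization \<Delta>"
  shows "0 \<le> \<mu> y" "\<mu> y \<le> 1" "msupp \<mu> \<in> \<Delta>" "finite (msupp \<mu>)" "msupp \<mu> \<noteq> {}"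
proof -
  have \<mu>: "\<forall>y. 0 \<le> \<mu> y" "msupp \<mu> \<in> \<Delta>" "finite (msupp \<mu>)" "sum \<mu> (msupp \<mu>) = 1"
    using assms unfolding realization_def by auto
  show "0 \<le> \<mu> y" "msupp \<mu> \<in> \<Delta>" "finite (msupp \<mu>)" using \<mu> by auto
  show "msupp \<mu> \<noteq> {}" using \<mu>(4) by auto
  show "\<mu> y \<le> 1"
  proof (cases "y \<in> msupp \<mu>")
    case True
    then have "\<mu> y \<le> sum \<mu> (msupp \<mu>)" using \<mu> by (intro member_le_sum) auto
    then show ?thesis using \<mu>(4) by simp
  qed (simp add: msupp_def)
qed

lemma limitin_realization_mintegral:
  assumes "limitin (realization_topology TY \<Delta>) \<phi> \<mu> F" "Cc TY f"
  shows "((\<lambda>x. mintegral (\<phi> x) f) \<longlongrightarrow> mintegral \<mu> f) F"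
proof (rule topological_tendstoI)
  fix S :: "real set" assume S: "open S" "mintegral \<mu> f \<in> S"
  let ?B = "{\<nu> \<in> realization \<Delta>. mintegral \<nu> f \<in> S}"
  have "openin (realization_topology TY \<Delta>) ?B" unfolding realization_topology_def
    by (rule topology_generated_by_Basis) (use S assms(2) in blast)
  moreover have "\<mu> \<in> ?B" using limitin_topspace[OF assms(1)] S by simp
  ultimately have "eventually (\<lambda>x. \<phi> x \<in> ?B) F" by (rule limitinD[OF assms(1)])
  then show "eventually (\<lambda>x. mintegral (\<phi> x) f \<in> S) F" by (rule eventually_mono) simp
qed

lemma finite_weights_eqI_Cc:
  assumes H: "Hausdorff_space X" and LC: "locally_compact_space X"
    and fin: "finite (msupp \<mu>1)" "finite (msupp \<mu>2)"
    and sub: "msupp \<mu>1 \<subseteq> topspace X" "msupp \<mu>2 \<subseteq> topspace X"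
    and eq: "\<And>f. Cc X f \<Longrightarrow> mintegral \<mu>1 f = mintegral \<mu>2 f"
  shows "\<mu>1 = \<mu>2"
proof (rule ext)
  fix y
  show "\<mu>1 y = \<mu>2 y"
  proof (cases "y \<in> topspace X")
    case True
    obtain f where f: "Cc X f" "f y = 1" "\<forall>x\<in>(msupp \<mu>1 \<union> msupp \<mu>2) - {y}. f x = 0"
      using exists_Cc_bump[OF H LC openin_topspace True, of "(msupp \<mu>1 \<union> msupp \<mu>2) - {y}"] fin
      by auto
    have "\<mu>1 y = mintegral \<mu>1 f" by (rule mintegral_eq_weight[symmetric]) (use f fin in auto)
    also have "\<dots> = mintegral \<mu>2 f" by (rule eq[OF f(1)])
    also have "\<dots> = \<mu>2 y" by (rule mintegral_eq_weight) (use f fin in auto)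
    finally show ?thesis .
  next
    case False
    then have "y \<notin> msupp \<mu>1" "y \<notin> msupp \<mu>2" using sub by auto
    then show ?thesis by (simp add: msupp_def)
  qed
qed

lemma realization_limit_dirac_sum:
  fixes n :: nat
  assumes H: "Hausdorff_space TY" and LC: "locally_compact_space TY" and "F \<noteq> bot"
    and lim: "limitin (realization_topology TY \<Delta>) \<phi> \<mu> F" and \<mu>_sub: "msupp \<mu> \<subseteq> topspace TY"
    and z: "\<And>j. j < n \<Longrightarrow> limitin TY (\<lambda>x. z x j) (y j) F"
    and w: "\<And>j. j < n \<Longrightarrow> ((\<lambda>x. w x j) \<longlongrightarrow> a j) F"
    and ev: "eventually (\<lambda>x. \<phi> x = dirac_sum {..<n} (w x) (z x)) F"
  shows "\<mu> = dirac_sum {..<n} a y"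
proof (rule finite_weights_eqI_Cc[OF H LC])
  show "finite (msupp \<mu>)"
    using limitin_topspace[OF lim] by (simp add: realization_weights)
  show "finite (msupp (dirac_sum {..<n} a y))" by (rule finite_msupp_dirac_sum) simp
  show "msupp \<mu> \<subseteq> topspace TY" by (fact \<mu>_sub)
  have "y ` {..<n} \<subseteq> topspace TY" using limitin_topspace[OF z] by auto
  then show "msupp (dirac_sum {..<n} a y) \<subseteq> topspace TY"
    using msupp_dirac_sum_subset[of "{..<n}" a y] by blast
  fix f assume f: "Cc TY f"
  then have cf: "continuous_map TY euclideanreal f" by (simp add: Cc_def)
  have "((\<lambda>x. \<Sum>j<n. w x j * f (z x j)) \<longlongrightarrow> (\<Sum>j<n. a j * f (y j))) F"
  proof (intro tendsto_sum tendsto_mult)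
    fix j assume "j \<in> {..<n}"
    then show "((\<lambda>x. w x j) \<longlongrightarrow> a j) F" "((\<lambda>x. f (z x j)) \<longlongrightarrow> f (y j)) F"
      using w continuous_map_limit[OF cf z] by (auto simp: o_def)
  qed
  moreover have "eventually (\<lambda>x. (\<Sum>j<n. w x j * f (z x j)) = mintegral (\<phi> x) f) F"
    using ev by (rule eventually_mono) (simp add: mintegral_dirac_sum)
  ultimately have "((\<lambda>x. mintegral (\<phi> x) f) \<longlongrightarrow> mintegral (dirac_sum {..<n} a y) f) F"
    unfolding mintegral_dirac_sum[OF finite_lessThan] by (rule Lim_transform_eventually)
  with limitin_realization_mintegral[OF lim f]
  show "mintegral \<mu> f = mintegral (dirac_sum {..<n} a y) f"
    by (rule tendsto_unique[OF \<open>F \<noteq> bot\<close>])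
qed

section \<open>Proper G-simplicial complexes\<close>

lemma local_homeomorphism_map_imp_continuous_map:
  assumes "local_homeomorphism_map X Y f"
  shows "continuous_map X Y f"
proof -
  have "\<forall>x\<in>topspace X. \<exists>U. openin X U \<and> x \<in> U \<and>
          homeomorphic_map (subtopology X U) (subtopology Y (f ` U)) f"
    using assms unfolding local_homeomorphism_map_def by blast
  then obtain U where U: "\<forall>x\<in>topspace X. openin X (U x) \<and> x \<in> U x \<and>
          homeomorphic_map (subtopology X (U x)) (subtopology Y (f ` U x)) f"
    by (rule bchoice[elim_format]) blast
  have cont: "continuous_map (subtopology X (U x)) Y f" if "x \<in> topspace X" for x
  proof -
    have "homeomorphic_map (subtopology X (U x)) (subtopology Y (f ` U x)) f" using U that by blast
    then have "continuous_map (subtopology X (U x)) (subtopology Y (f ` U x)) f"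
      by (rule homeomorphic_imp_continuous_map)
    then show ?thesis by (simp add: continuous_map_in_subtopology)
  qed
  show ?thesis
  proof (rule pasting_lemma[where I = "topspace X" and T = U and f = "\<lambda>_. f"])
    show "\<exists>j. j \<in> topspace X \<and> x \<in> U j \<and> f x = f x" if "x \<in> topspace X" for x
      using U that by blast
  qed (use U cont in simp_all)
qed

locale proper_simplicial_action =
  fixes TG :: "'g topology" and r s :: "'g \<Rightarrow> 'g" and m :: "'g \<Rightarrow> 'g \<Rightarrow> 'g"
    and TY :: "'y topology" and \<rho> :: "'y \<Rightarrow> 'g" and act :: "'g \<Rightarrow> 'y \<Rightarrow> 'y"
    and \<Delta> :: "'y set set"
  assumes Hausdorff_arrows: "Hausdorff_space TG"
    and continuous_source: "continuous_map TG TG s"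
    and complex: "G_simplicial_complex TG r s m TY \<rho> act \<Delta>"
    and proper_on_vertices: "proper_action TG s TY \<rho> act"
    and H1: "hyp_H1 TY \<Delta>"
begin

abbreviation "TR \<equiv> realization_topology TY \<Delta>"
abbreviation "anchor \<equiv> realization_anchor \<rho>"
abbreviation "vertex_pairs \<equiv> action_domain TG s (topspace TY) \<rho>"
abbreviation "measure_pairs \<equiv> action_domain TG s (realization \<Delta>) anchor"

lemma G_space: "G_space TG r s m TY \<rho> act"
  using complex unfolding G_simplicial_complex_def by blast

lemma Hausdorff_vertices: "Hausdorff_space TY"
  and locally_compact_vertices: "locally_compact_space TY"
  and continuous_action: "continuous_map (subtopology (prod_topology TG TY) vertex_pairs) TY
                            (\<lambda>(g, y). act g y)"
  using G_space unfolding G_space_def by blast+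

lemma continuous_anchor: "continuous_map TY TG \<rho>"
proof -
  have "local_homeomorphism_map TY (subtopology TG (unit_space TG r)) \<rho>"
    using G_space unfolding G_space_def by blast
  then show ?thesis
    by (auto dest: local_homeomorphism_map_imp_continuous_map simp: continuous_map_in_subtopology)
qed

lemma proper_vertex_map:
  "proper_map (subtopology (prod_topology TG TY) vertex_pairs) (prod_topology TY TY)
     (\<lambda>(g, y). (act g y, y))"
  using proper_on_vertices unfolding proper_action_def .

(* The face axiom, used as a rewrite or search rule, sends simp and blast into a loop;
   hence the axioms are projected out by hand. *)
lemma complex_conditions:
  "(\<forall>\<delta>\<in>\<Delta>. finite \<delta> \<and> \<delta> \<noteq> {} \<and> \<delta> \<subseteq> topspace TY \<and> (\<exists>x. \<forall>y\<in>\<delta>. \<rho> y = x)) \<and>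
   (\<exists>N::nat. \<forall>\<delta>\<in>\<Delta>. card \<delta> \<le> N) \<and>
   (\<forall>\<delta>\<in>\<Delta>. \<forall>\<delta>'\<subseteq>\<delta>. \<delta>' \<noteq> {} \<longrightarrow> \<delta>' \<in> \<Delta>) \<and>
   (\<forall>\<delta>\<in>\<Delta>. \<forall>g\<in>topspace TG. (\<forall>y\<in>\<delta>. s g = \<rho> y) \<longrightarrow> act g ` \<delta> \<in> \<Delta>)"
  using complex unfolding G_simplicial_complex_def by (elim conjE) (intro conjI; assumption)

lemma face_in_complex: "\<delta> \<in> \<Delta> \<Longrightarrow> \<delta>' \<subseteq> \<delta> \<Longrightarrow> \<delta>' \<noteq> {} \<Longrightarrow> \<delta>' \<in> \<Delta>"
  using complex_conditions by (elim conjE) metis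

lemma simplex_subset_vertices: "\<delta> \<in> \<Delta> \<Longrightarrow> \<delta> \<subseteq> topspace TY"
  using complex_conditions by (elim conjE) metis

lemma image_simplex_in_complex:
  "\<delta> \<in> \<Delta> \<Longrightarrow> g \<in> topspace TG \<Longrightarrow> (\<forall>y\<in>\<delta>. s g = \<rho> y) \<Longrightarrow> act g ` \<delta> \<in> \<Delta>"
  using complex_conditions by (elim conjE) metis

lemma bounded_dimension: "\<exists>N::nat. \<forall>\<delta>\<in>\<Delta>. card \<delta> \<le> N"
  using complex_conditions by (elim conjE)

lemma simplex_in_fibre:
  assumes "\<delta> \<in> \<Delta>" "y \<in> \<delta>" "y' \<in> \<delta>"
  shows "\<rho> y = \<rho> y'"
proof -
  obtain x where "\<forall>y\<in>\<delta>. \<rho> y = x"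
    using complex_conditions assms(1) by (elim conjE) metis
  then show ?thesis using assms(2,3) by simp
qed

lemma support_in_vertices: "\<mu> \<in> realization \<Delta> \<Longrightarrow> msupp \<mu> \<subseteq> topspace TY"
  by (rule simplex_subset_vertices[OF realization_weights(3)])

lemma anchor_eq:
  assumes "\<mu> \<in> realization \<Delta>" "y \<in> msupp \<mu>"
  shows "anchor \<mu> = \<rho> y"
proof -
  have "(SOME y. y \<in> msupp \<mu>) \<in> msupp \<mu>" using assms(2) by (rule someI)
  then show ?thesis
    using simplex_in_fibre[OF realization_weights(3)[OF assms(1)] _ assms(2)]
    unfolding realization_anchor_def by simp
qed

lemma pushforward_in_realization:
  assumes \<mu>: "\<mu> \<in> realization \<Delta>" and g: "g \<in> topspace TG" "s g = anchor \<mu>"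
  shows "pushforward act g \<mu> \<in> realization \<Delta>"
proof -
  note \<mu>_weights = realization_weights[OF \<mu>]
  have supp: "msupp (pushforward act g \<mu>) = act g ` msupp \<mu>"
    using \<mu>_weights by (intro msupp_pushforward) auto
  have "act g ` msupp \<mu> \<in> \<Delta>"
    using image_simplex_in_complex[OF \<mu>_weights(3) g(1)] anchor_eq[OF \<mu>] g(2) by simp
  moreover have "0 \<le> pushforward act g \<mu> y" for y
    unfolding pushforward_def using \<mu>_weights(1) by (simp add: sum_nonneg)
  moreover have "sum (pushforward act g \<mu>) (msupp (pushforward act g \<mu>)) = 1"
  proof -
    have "sum (pushforward act g \<mu>) (msupp (pushforward act g \<mu>))
          = mintegral (pushforward act g \<mu>) (\<lambda>_. 1)"
      by (simp add: mintegral_def)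
    also have "\<dots> = mintegral \<mu> (\<lambda>_. 1)" by (rule mintegral_pushforward[OF \<mu>_weights(4)])
    also have "\<dots> = 1" using \<mu> by (simp add: mintegral_def realization_def)
    finally show ?thesis .
  qed
  ultimately show ?thesis
    unfolding realization_def using supp \<mu>_weights(4) by simp
qed

lemma realization_dirac_sum_enumeration:
  obtains z w and N :: nat where
    "\<And>\<mu> j. \<mu> \<in> realization \<Delta> \<Longrightarrow> z \<mu> j \<in> msupp \<mu>"
    "\<And>\<mu> j. \<mu> \<in> realization \<Delta> \<Longrightarrow> w \<mu> j \<in> {0..1}"
    "\<And>\<mu>. \<mu> \<in> realization \<Delta> \<Longrightarrow> dirac_sum {..<N} (w \<mu>) (z \<mu>) = \<mu>"
proof -
  obtain N :: nat where N: "\<And>\<delta>. \<delta> \<in> \<Delta> \<Longrightarrow> card \<delta> \<le> N"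
    using bounded_dimension by blast
  have "\<forall>\<mu>\<in>realization \<Delta>. \<exists>z w. (\<forall>j. z j \<in> msupp \<mu>) \<and> (\<forall>j. w j \<in> {0..1})
                                   \<and> dirac_sum {..<N} w z = \<mu>"
  proof
    fix \<mu> assume \<mu>: "\<mu> \<in> realization \<Delta>"
    note \<mu>_weights = realization_weights[OF \<mu>]
    obtain z w where z: "\<forall>j. z j \<in> msupp \<mu>" and w: "\<forall>j. w j \<in> insert 0 (\<mu> ` msupp \<mu>)"
        and eq: "dirac_sum {..<N} w z = \<mu>"
      using dirac_sum_enumeration[OF \<mu>_weights(4,5) N[OF \<mu>_weights(3)]] by (elim exE conjE)
    have "\<forall>j. w j \<in> {0..1}"
    proof
      fix j
      have "w j = 0 \<or> (\<exists>y. w j = \<mu> y)" using w by blast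
      then show "w j \<in> {0..1}" using \<mu>_weights(1,2) by auto
    qed
    with z eq show "\<exists>z w. (\<forall>j. z j \<in> msupp \<mu>) \<and> (\<forall>j. w j \<in> {0..1}) \<and> dirac_sum {..<N} w z = \<mu>"
      by (intro exI[of _ z] exI[of _ w] conjI)
  qed
  then obtain z w where "\<forall>\<mu>\<in>realization \<Delta>. (\<forall>j. z \<mu> j \<in> msupp \<mu>) \<and> (\<forall>j. w \<mu> j \<in> {0..1})
                                           \<and> dirac_sum {..<N} (w \<mu>) (z \<mu>) = \<mu>"
    by metis
  then show ?thesis by (intro that[of z w N]) auto
qed

lemma measure_pairs_iff:
  "x \<in> measure_pairs \<longleftrightarrow> fst x \<in> topspace TG \<and> snd x \<in> realization \<Delta> \<and> s (fst x) = anchor (snd x)"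
  by (cases x) (simp add: action_domain_def)

lemma limitin_support_eventually_compact:
  assumes lim: "limitin TR \<phi> \<mu> F"
  shows "\<exists>L. compactin TY L \<and> eventually (\<lambda>x. msupp (\<phi> x) \<subseteq> L) F"
proof -
  have \<mu>: "\<mu> \<in> realization \<Delta>" using limitin_topspace[OF lim] by simp
  obtain y0 where y0: "y0 \<in> msupp \<mu>" using realization_weights(5)[OF \<mu>] by blast
  then have "y0 \<in> topspace TY" using support_in_vertices[OF \<mu>] by blast
  then obtain U0 K0 where UK: "openin TY U0" "compactin TY K0" "y0 \<in> U0" "U0 \<subseteq> K0"
    using locally_compact_vertices unfolding locally_compact_space_def by blast
  obtain f where f: "Cc TY f" "f y0 = 1" "\<forall>x. 0 \<le> f x" "\<forall>x. x \<notin> U0 \<longrightarrow> f x = 0"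
    using exists_Cc_bump[OF Hausdorff_vertices locally_compact_vertices UK(1,3), of "{}"] by auto
  have "\<mu> y0 * f y0 \<le> mintegral \<mu> f"
    unfolding mintegral_def
    by (rule member_le_sum) (use y0 f realization_weights[OF \<mu>] in auto)
  moreover have "0 < \<mu> y0" using y0 realization_weights(1)[OF \<mu>, of y0] by (simp add: msupp_def)
  ultimately have "0 < mintegral \<mu> f" using f(2) by simp
  then have "eventually (\<lambda>x. 0 < mintegral (\<phi> x) f) F"
    by (rule order_tendstoD(1)[OF limitin_realization_mintegral[OF lim f(1)]])
  moreover have "eventually (\<lambda>x. \<phi> x \<in> realization \<Delta>) F"
    using limitinD[OF lim openin_topspace] \<mu> by simp
  ultimately have "eventually (\<lambda>x. msupp (\<phi> x) \<subseteq> {y. \<exists>y'\<in>K0. {y, y'} \<in> \<Delta>}) F"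
  proof eventually_elim
    case (elim x)
    have "\<exists>y\<in>msupp (\<phi> x). f y \<noteq> 0"
    proof (rule ccontr)
      assume "\<not> ?thesis"
      then have "mintegral (\<phi> x) f = 0" unfolding mintegral_def by simp
      with elim(1) show False by simp
    qed
    then obtain y where y: "y \<in> msupp (\<phi> x)" "y \<in> K0" using f(4) UK(4) by blast
    show ?case
    proof
      fix y' assume "y' \<in> msupp (\<phi> x)"
      then have "{y', y} \<in> \<Delta>"
        using face_in_complex[OF realization_weights(3)[OF elim(2)]] y by simp
      then show "y' \<in> {y. \<exists>y'\<in>K0. {y, y'} \<in> \<Delta>}" using y by blast
    qed
  qed
  moreover have "compactin TY {y. \<exists>y'\<in>K0. {y, y'} \<in> \<Delta>}"
    using H1 UK(2) unfolding hyp_H1_def by blast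
  ultimately show ?thesis by blast
qed

lemma arrows_eventually_in_compactin:
  assumes ev: "eventually (\<lambda>x. x \<in> measure_pairs) F"
    and limP: "limitin TR (\<lambda>x. pushforward act (fst x) (snd x)) \<nu> F"
    and limM: "limitin TR snd \<mu> F"
  shows "\<exists>K. compactin TG K \<and> eventually (\<lambda>x. fst x \<in> K) F"
proof -
  obtain L0 where L0: "compactin TY L0" "eventually (\<lambda>x. msupp (snd x) \<subseteq> L0) F"
    using limitin_support_eventually_compact[OF limM] by blast
  obtain L1 where L1: "compactin TY L1"
    "eventually (\<lambda>x. msupp (pushforward act (fst x) (snd x)) \<subseteq> L1) F"
    using limitin_support_eventually_compact[OF limP] by blast
  let ?X = "subtopology (prod_topology TG TY) vertex_pairs"
  define P where "P = {v \<in> topspace ?X. (\<lambda>(g, y). (act g y, y)) v \<in> L1 \<times> L0}"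
  have "compactin ?X P"
    unfolding P_def using compactin_proper_map_preimage[OF proper_vertex_map] L0(1) L1(1)
    by (simp add: compactin_Times)
  moreover have "continuous_map ?X TG fst"
    by (rule continuous_map_from_subtopology) (rule continuous_map_fst)
  ultimately have "compactin TG (fst ` P)" by (rule image_compactin)
  moreover have "eventually (\<lambda>x. fst x \<in> fst ` P) F"
    using ev L0(2) L1(2)
  proof eventually_elim
    case (elim x)
    then have x: "fst x \<in> topspace TG" "snd x \<in> realization \<Delta>" "s (fst x) = anchor (snd x)"
      by (simp_all add: measure_pairs_iff)
    note weights = realization_weights[OF x(2)]
    obtain y where y: "y \<in> msupp (snd x)" using weights(5) by blast
    have "y \<in> topspace TY" using y support_in_vertices[OF x(2)] by blast
    moreover have "s (fst x) = \<rho> y" using x(3) anchor_eq[OF x(2) y] by simp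
    moreover have "act (fst x) y \<in> L1"
      using y elim(3) msupp_pushforward[of "snd x" act "fst x"] weights(1,4) by blast
    ultimately have "(fst x, y) \<in> P"
      using x(1) y elim(2) unfolding P_def by (auto simp: action_domain_def)
    then show ?case by force
  qed
  ultimately show ?thesis by blast
qed

lemma vertex_limits:
  assumes "F \<noteq> bot" and ev: "eventually (\<lambda>x. x \<in> measure_pairs) F"
    and limg: "limitin TG fst g F" and limz: "limitin TY (\<lambda>x. z x) y F"
    and supp: "eventually (\<lambda>x. z x \<in> msupp (snd x)) F"
  shows "s g = \<rho> y" and "limitin TY (\<lambda>x. act (fst x) (z x)) (act g y) F"
proof -
  have anchored: "eventually (\<lambda>x. fst x \<in> topspace TG \<and> z x \<in> topspace TY \<and> s (fst x) = \<rho> (z x)) F"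
    using ev supp
  proof eventually_elim
    case (elim x)
    then have "snd x \<in> realization \<Delta>" by (simp add: measure_pairs_iff)
    then show ?case
      using elim support_in_vertices anchor_eq by (auto simp: measure_pairs_iff)
  qed
  have "limitin TG (\<rho> \<circ> z) (\<rho> y) F"
    by (rule continuous_map_limit[OF continuous_anchor limz])
  then have "limitin TG (s \<circ> fst) (\<rho> y) F"
    by (rule limitin_transform_eventually[rotated])
       (use anchored in \<open>auto elim: eventually_mono\<close>)
  moreover have "limitin TG (s \<circ> fst) (s g) F"
    by (rule continuous_map_limit[OF continuous_source limg])
  ultimately show source: "s g = \<rho> y"
    using limitin_Hausdorff_unique[OF _ _ _ Hausdorff_arrows] \<open>F \<noteq> bot\<close> by blast
  have "limitin (subtopology (prod_topology TG TY) vertex_pairs) (\<lambda>x. (fst x, z x)) (g, y) F"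
    unfolding limitin_subtopology
  proof (intro conjI)
    show "(g, y) \<in> vertex_pairs"
      using limitin_topspace[OF limg] limitin_topspace[OF limz] source
      by (simp add: action_domain_def)
    show "eventually (\<lambda>x. (fst x, z x) \<in> vertex_pairs) F"
      using anchored by (rule eventually_mono) (simp add: action_domain_def)
    show "limitin (prod_topology TG TY) (\<lambda>x. (fst x, z x)) (g, y) F"
      unfolding limitin_pairwise using limg limz by (simp add: o_def)
  qed
  from continuous_map_limit[OF continuous_action this]
  show "limitin TY (\<lambda>x. act (fst x) (z x)) (act g y) F" by (simp add: o_def)
qed

lemma pushforward_limit_of_converging_atoms:
  fixes N :: nat
  assumes "F \<noteq> bot" and ev: "eventually (\<lambda>x. x \<in> measure_pairs) F"
    and limP: "limitin TR (\<lambda>x. pushforward act (fst x) (snd x)) \<nu> F"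
    and limM: "limitin TR snd \<mu> F" and limg: "limitin TG fst g F"
    and limz: "\<And>j. j < N \<Longrightarrow> limitin TY (\<lambda>x. z x j) (y j) F"
    and limw: "\<And>j. j < N \<Longrightarrow> ((\<lambda>x. w x j) \<longlongrightarrow> a j) F"
    and supp: "eventually (\<lambda>x. \<forall>j. z x j \<in> msupp (snd x)) F"
    and enum: "eventually (\<lambda>x. dirac_sum {..<N} (w x) (z x) = snd x) F"
  shows "(g, \<mu>) \<in> measure_pairs \<and> pushforward act g \<mu> = \<nu>"
proof -
  have \<mu>: "\<mu> \<in> realization \<Delta>" using limitin_topspace[OF limM] by simp
  have \<nu>: "\<nu> \<in> realization \<Delta>" using limitin_topspace[OF limP] by simp
  have supp_j: "eventually (\<lambda>x. z x j \<in> msupp (snd x)) F" for j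
    using supp by (rule eventually_mono) blast
  note vertex = vertex_limits[OF \<open>F \<noteq> bot\<close> ev limg limz supp_j]
  have \<mu>_eq: "\<mu> = dirac_sum {..<N} a y"
    using enum
    by (intro realization_limit_dirac_sum[OF Hausdorff_vertices locally_compact_vertices
          \<open>F \<noteq> bot\<close> limM support_in_vertices[OF \<mu>] limz limw])
       (auto elim: eventually_mono)
  have "\<nu> = dirac_sum {..<N} a (\<lambda>j. act g (y j))"
  proof (rule realization_limit_dirac_sum[OF Hausdorff_vertices locally_compact_vertices
          \<open>F \<noteq> bot\<close> limP support_in_vertices[OF \<nu>] vertex(2) limw])
    show "eventually (\<lambda>x. pushforward act (fst x) (snd x)
                         = dirac_sum {..<N} (w x) (\<lambda>j. act (fst x) (z x j))) F"
      using enum by (rule eventually_mono) (metis finite_lessThan pushforward_dirac_sum)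
  qed
  then have push: "pushforward act g \<mu> = \<nu>"
    unfolding \<mu>_eq by (simp add: pushforward_dirac_sum)
  obtain y1 where "y1 \<in> msupp \<mu>" using realization_weights(5)[OF \<mu>] by blast
  moreover have "msupp \<mu> \<subseteq> y ` {..<N}"
    unfolding \<mu>_eq by (rule msupp_dirac_sum_subset)
  ultimately obtain j where "j < N" "y j \<in> msupp \<mu>" by blast
  then have "s g = anchor \<mu>" using vertex(1) anchor_eq[OF \<mu>] by simp
  then show ?thesis
    using push \<mu> limitin_topspace[OF limg] by (simp add: measure_pairs_iff)
qed

lemma pushforward_limit_lift:
  assumes "F \<noteq> bot" and ev: "eventually (\<lambda>x. x \<in> measure_pairs) F"
    and limP: "limitin TR (\<lambda>x. pushforward act (fst x) (snd x)) \<nu> F"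
    and limM: "limitin TR snd \<mu> F"
  shows "\<exists>F'\<le>F. F' \<noteq> bot \<and>
           (\<exists>g. limitin TG fst g F' \<and> (g, \<mu>) \<in> measure_pairs \<and> pushforward act g \<mu> = \<nu>)"
proof -
  obtain Z W and N :: nat where Z: "\<And>\<mu> j. \<mu> \<in> realization \<Delta> \<Longrightarrow> Z \<mu> j \<in> msupp \<mu>"
    and W: "\<And>\<mu> j. \<mu> \<in> realization \<Delta> \<Longrightarrow> W \<mu> j \<in> {0..1}"
    and enum: "\<And>\<mu>. \<mu> \<in> realization \<Delta> \<Longrightarrow> dirac_sum {..<N} (W \<mu>) (Z \<mu>) = \<mu>"
    by (rule realization_dirac_sum_enumeration) (rule that; assumption)
  have in_realization: "eventually (\<lambda>x. snd x \<in> realization \<Delta>) F"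
    using ev by (rule eventually_mono) (simp add: measure_pairs_iff)
  obtain K where "compactin TG K" "eventually (\<lambda>x. fst x \<in> K) F"
    using arrows_eventually_in_compactin[OF ev limP limM] by blast
  then obtain F1 g where F1: "F1 \<le> F" "F1 \<noteq> bot" and limg: "limitin TG fst g F1"
    using compactin_limit_refinement[OF \<open>F \<noteq> bot\<close>] by blast
  obtain L where L: "compactin TY L" "eventually (\<lambda>x. msupp (snd x) \<subseteq> L) F"
    using limitin_support_eventually_compact[OF limM] by blast
  have "eventually (\<lambda>x. (Z (snd x) j, W (snd x) j) \<in> L \<times> {0..1}) F1" for j
  proof -
    have "eventually (\<lambda>x. (Z (snd x) j, W (snd x) j) \<in> L \<times> {0..1}) F"
      using in_realization L(2) by eventually_elim (use Z W in blast)
    then show ?thesis using F1(1) by (rule filter_leD[rotated])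
  qed
  moreover have "compactin (prod_topology TY euclideanreal) (L \<times> {0..1})"
    using L(1) by (simp add: compactin_Times)
  ultimately obtain F2 p where F2: "F2 \<le> F1" "F2 \<noteq> bot"
    and p: "\<forall>j<N. p j \<in> L \<times> {0..1} \<and>
              limitin (prod_topology TY euclideanreal) (\<lambda>x. (Z (snd x) j, W (snd x) j)) (p j) F2"
    using compactin_limit_refinement_finite_family[OF F1(2),
        where n = N and \<phi> = "\<lambda>x j. (Z (snd x) j, W (snd x) j)"]
    by blast
  have F2F: "F2 \<le> F" using F1(1) F2(1) by (rule order_trans[rotated])
  have "(g, \<mu>) \<in> measure_pairs \<and> pushforward act g \<mu> = \<nu>"
  proof (rule pushforward_limit_of_converging_atoms[OF F2(2)])
    show "eventually (\<lambda>x. x \<in> measure_pairs) F2" using ev F2F by (rule filter_leD[rotated])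
    show "limitin TR (\<lambda>x. pushforward act (fst x) (snd x)) \<nu> F2"
      using limP F2F by (rule limitin_filter_mono)
    show "limitin TR snd \<mu> F2" using limM F2F by (rule limitin_filter_mono)
    show "limitin TG fst g F2" using limg F2(1) by (rule limitin_filter_mono)
    show "limitin TY (\<lambda>x. Z (snd x) j) (fst (p j)) F2" "((\<lambda>x. W (snd x) j) \<longlongrightarrow> snd (p j)) F2"
      if "j < N" for j
      using p that unfolding limitin_pairwise by (simp_all add: o_def)
    have "eventually (\<lambda>x. snd x \<in> realization \<Delta>) F2"
      using in_realization F2F by (rule filter_leD[rotated])
    then show "eventually (\<lambda>x. \<forall>j. Z (snd x) j \<in> msupp (snd x)) F2"
      and "eventually (\<lambda>x. dirac_sum {..<N} (W (snd x)) (Z (snd x)) = snd x) F2"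
      by (auto elim!: eventually_mono simp: Z enum)
  qed
  with F2F F2(2) limitin_filter_mono[OF limg F2(1)] show ?thesis by blast
qed

theorem proper_action_realization: "proper_action TG s TR anchor (pushforward act)"
  unfolding proper_action_def topspace_realization_topology
proof (rule proper_map_if_limits_lift)
  let ?X = "subtopology (prod_topology TG TR) measure_pairs"
  have topX: "topspace ?X = measure_pairs" by (auto simp: action_domain_def)
  show "(\<lambda>(g, z). (pushforward act g z, z)) ` topspace ?X \<subseteq> topspace (prod_topology TR TR)"
    unfolding topX by (auto simp: measure_pairs_iff pushforward_in_realization)
  fix F q assume F: "F \<noteq> bot" "eventually (\<lambda>x. x \<in> topspace ?X) F"
    and lim: "limitin (prod_topology TR TR) (\<lambda>(g, z). (pushforward act g z, z)) q F"
  obtain \<nu> \<mu> where q: "q = (\<nu>, \<mu>)" by fastforce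
  have ev: "eventually (\<lambda>x. x \<in> measure_pairs) F" using F(2) unfolding topX .
  have limP: "limitin TR (\<lambda>x. pushforward act (fst x) (snd x)) \<nu> F"
    and limM: "limitin TR snd \<mu> F"
    using lim unfolding q limitin_pairwise by (simp_all add: o_def case_prod_beta)
  obtain F' g where F': "F' \<le> F" "F' \<noteq> bot" and limg: "limitin TG fst g F'"
    and g: "(g, \<mu>) \<in> measure_pairs" "pushforward act g \<mu> = \<nu>"
    using pushforward_limit_lift[OF F(1) ev limP limM] by blast
  have "limitin ?X (\<lambda>x. x) (g, \<mu>) F'"
    unfolding limitin_subtopology limitin_pairwise
    using g(1) filter_leD[OF F'(1) ev] limg limitin_filter_mono[OF limM F'(1)] by (simp add: o_def)
  then show "\<exists>F'\<le>F. F' \<noteq> bot \<and> (\<exists>x. limitin ?X (\<lambda>x. x) x F' \<and>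
               (\<lambda>(g, z). (pushforward act g z, z)) x = q)"
    using F'(1,2) g(2) q by auto
qed

end

theorem proposition3p24:
  fixes TG :: "'g topology" and r s :: "'g \<Rightarrow> 'g" and m :: "'g \<Rightarrow> 'g \<Rightarrow> 'g" and i :: "'g \<Rightarrow> 'g"
    and TY :: "'y topology" and \<rho> :: "'y \<Rightarrow> 'g" and act :: "'g \<Rightarrow> 'y \<Rightarrow> 'y"
    and \<Delta> :: "'y set set"
  assumes "etale_groupoid TG r s m i"
    and "proper_G_simplicial_complex TG r s m TY \<rho> act \<Delta>"
    and "hyp_H1 TY \<Delta>"
    and "hyp_H2 TY \<Delta>"
  shows "proper_action TG s (realization_topology TY \<Delta>) (realization_anchor \<rho>) (pushforward act)"
proof -
  interpret proper_simplicial_action TG r s m TY \<rho> act \<Delta>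
  proof
    show "Hausdorff_space TG" "continuous_map TG TG s"
      using assms(1) by (simp_all add: etale_groupoid_def topological_groupoid_def)
    show "G_simplicial_complex TG r s m TY \<rho> act \<Delta>" "proper_action TG s TY \<rho> act"
      using assms(2) by (simp_all add: proper_G_simplicial_complex_def)
  qed (fact assms(3))
  show ?thesis by (rule proper_action_realization)
qed

end
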